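(* Let $\mathcal{A}$ be a finite set of at least 3 alternatives, $N\ge 2$, and $w:\underline{\mathcal{P}}^N\to\underline{\mathcal{P}}$ a Social Welfare Function satisfying Unanimity, IIA and Non-Dictatorship. Then for every function $\mathrm{app}:\underline{\mathcal{P}}^N\times\underline{\mathcal{P}}\to\underline{\mathcal{P}}^N$ there is no $\Upsilon\in\underline{\mathcal{P}}^N$ that is consistency-respecting, i.e. there is no $\Upsilon$ such that for all $d,d'\in\mathcal{P}^N$: $d\Join d'$ if and only if $\mathrm{app}(\Upsilon,w(d))\Join\mathrm{app}(\Upsilon,w(d'))$.
   Context: $\mathcal{P}$ is the set of weak orders on $\mathcal{A}$; $\underline{\mathcal{P}}=\mathcal{P}\cup\{\mathbf{c}\}$, $\mathbf{c}$ a new element representing (all) contradictory preference cycles. Strictness order: $r\le s$ iff every strict preference of $s$ is a strict preference of $r$, with $\mathbf{c}$ added as bottom; $\wedge$ denotes greatest lower bound in $\underline{\mathcal{P}}$ (two weak orders with opposing strict preferences have meet $\mathbf{c}$). On $\underline{\mathcal{P}}^N$ (tuples over $\underline{\mathcal{P}}$; $\mathcal{P}^N$ the valid profiles) $\wedge$ is taken coordinatewise, and $p\Join q$ ("consistent") means $p\wedge q\in\mathcal{P}^N$, i.e. $p_j\wedge q_j\ne\mathbf{c}$ for every $j$. Only the values of $w$ on $\mathcal{P}^N$ matter for the following axioms. Unanimity: if every individual of $p\in\mathcal{P}^N$ strictly prefers $a$ to $b$, so does $w(p)$. IIA: the aggregate comparison of $a$ and $b$ depends only on the individuals' comparisons of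 $a$ and $b$ (for these two axioms an output $\mathbf{c}$ is understood as a preference cycle, i.e. an intransitive assignment of pairwise comparisons). $w$ has a dictator at $i$ if for all $p\in\mathcal{P}^N$: $w(p)=\mathbf{c}$ implies $p_i=\mathbf{i}$ (total indifference), and $p_i\ne\mathbf{i}$ implies $w(p)\le p_i$. Non-Dictatorship: $w$ has no dictator. *)

theory Defs
  imports Main
begin

text \<open>Weak orders on the alternatives 'a: reflexive, total, transitive relations,
  where (x,y) in R means "x is weakly preferred to y".\<close>

definition weak_order :: "('a \<times> 'a) set \<Rightarrow> bool" where
  "weak_order R \<longleftrightarrow> refl R \<and> total R \<and> trans R"

typedef 'a wo = "{R :: ('a \<times> 'a) set. weak_order R}"
  by (rule exI[of _ UNIV]) (auto simp: weak_order_def refl_on_def total_on_def trans_def)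

text \<open>The extended set of preferences: weak orders plus the element c (Cyc).\<close>
datatype 'a upref = WO "'a wo" | Cyc

definition strict :: "('a \<times> 'a) set \<Rightarrow> 'a \<Rightarrow> 'a \<Rightarrow> bool" where
  "strict R x y \<longleftrightarrow> (x, y) \<in> R \<and> (y, x) \<notin> R"

fun sle :: "'a upref \<Rightarrow> 'a upref \<Rightarrow> bool" where
  "sle Cyc _ = True"
| "sle (WO r) Cyc = False"
| "sle (WO r) (WO s) = (\<forall>x y. strict (Rep_wo s) x y \<longrightarrow> strict (Rep_wo r) x y)"

definition is_meet :: "'a upref \<Rightarrow> 'a upref \<Rightarrow> 'a upref \<Rightarrow> bool" where
  "is_meet x y m \<longleftrightarrow> sle m x \<and> sle m y \<and> (\<forall>z. sle z x \<and> sle z y \<longrightarrow> sle z m)"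

definition meet :: "'a upref \<Rightarrow> 'a upref \<Rightarrow> 'a upref" where
  "meet x y = (THE m. is_meet x y m)"

definition valid :: "('i \<Rightarrow> 'a upref) \<Rightarrow> bool" where
  "valid p \<longleftrightarrow> (\<forall>j. p j \<noteq> Cyc)"

definition consistent :: "('i \<Rightarrow> 'a upref) \<Rightarrow> ('i \<Rightarrow> 'a upref) \<Rightarrow> bool" where
  "consistent p q \<longleftrightarrow> (\<forall>j. meet (p j) (q j) \<noteq> Cyc)"

definition indiff :: "'a upref" where
  "indiff = WO (Abs_wo UNIV)"

fun urel :: "'a upref \<Rightarrow> ('a \<times> 'a) set" where
  "urel (WO r) = Rep_wo r"
| "urel Cyc = {}"

text \<open>Unanimity and IIA: the output Cyc is understood as an intransitive assignment of
  pairwise comparisons.  So w is assumed to arise from a function W assigning to each valid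
  profile a complete (reflexive, total) pairwise comparison relation, with w p = Cyc exactly
  when W p is intransitive, and W satisfying Unanimity and IIA.\<close>

definition unanimous_rel :: "(('i \<Rightarrow> 'a upref) \<Rightarrow> ('a \<times> 'a) set) \<Rightarrow> bool" where
  "unanimous_rel W \<longleftrightarrow> (\<forall>p x y. valid p \<longrightarrow> (\<forall>j. strict (urel (p j)) x y) \<longrightarrow> strict (W p) x y)"

definition iia_rel :: "(('i \<Rightarrow> 'a upref) \<Rightarrow> ('a \<times> 'a) set) \<Rightarrow> bool" where
  "iia_rel W \<longleftrightarrow> (\<forall>p q x y. valid p \<longrightarrow> valid q \<longrightarrow>
      (\<forall>j. urel (p j) \<inter> ({x, y} \<times> {x, y}) = urel (q j) \<inter> ({x, y} \<times> {x, y})) \<longrightarrow>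
      W p \<inter> ({x, y} \<times> {x, y}) = W q \<inter> ({x, y} \<times> {x, y}))"

definition induced_by :: "(('i \<Rightarrow> 'a upref) \<Rightarrow> 'a upref) \<Rightarrow> (('i \<Rightarrow> 'a upref) \<Rightarrow> ('a \<times> 'a) set) \<Rightarrow> bool" where
  "induced_by w W \<longleftrightarrow> (\<forall>p. valid p \<longrightarrow> refl (W p) \<and> total (W p) \<and>
      w p = (if trans (W p) then WO (Abs_wo (W p)) else Cyc))"

definition unanimity_iia :: "(('i \<Rightarrow> 'a upref) \<Rightarrow> 'a upref) \<Rightarrow> bool" where
  "unanimity_iia w \<longleftrightarrow> (\<exists>W. induced_by w W \<and> unanimous_rel W \<and> iia_rel W)"

definition dictator :: "(('i \<Rightarrow> 'a upref) \<Rightarrow> 'a upref) \<Rightarrow> 'i \<Rightarrow> bool" where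
  "dictator w i \<longleftrightarrow> (\<forall>p. valid p \<longrightarrow>
      (w p = Cyc \<longrightarrow> p i = indiff) \<and> (p i \<noteq> indiff \<longrightarrow> sle (w p) (p i)))"

definition non_dictatorship :: "(('i \<Rightarrow> 'a upref) \<Rightarrow> 'a upref) \<Rightarrow> bool" where
  "non_dictatorship w \<longleftrightarrow> \<not> (\<exists>i. dictator w i)"

definition consistency_respecting ::
  "(('i \<Rightarrow> 'a upref) \<Rightarrow> 'a upref) \<Rightarrow> (('i \<Rightarrow> 'a upref) \<Rightarrow> 'a upref \<Rightarrow> ('i \<Rightarrow> 'a upref))
     \<Rightarrow> ('i \<Rightarrow> 'a upref) \<Rightarrow> bool" where
  "consistency_respecting w app \<Upsilon> \<longleftrightarrow> (\<forall>d d'. valid d \<longrightarrow> valid d' \<longrightarrow>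
      (consistent d d' \<longleftrightarrow> consistent (app \<Upsilon> (w d)) (app \<Upsilon> (w d'))))"

end

theory Submission
  imports Defs
begin

(* Fix alternatives a \<noteq> b and
   voters i \<noteq> j, and consider the four profiles in which everybody ranks a and b on top, i and j
   each choosing the order of a and b independently.  Any two of them are inconsistent, so a
   consistency-respecting \<Upsilon> forces w to take four distinct values on them.  But by IIA the
   social relation on these profiles is determined by its comparison of a and b, which by
   totality takes only three values. *)

lemma sle_refl: "sle x x"
  by (cases x) auto

lemma Rep_wo_eqI:
  assumes "\<And>x y. strict (Rep_wo r) x y \<longleftrightarrow> strict (Rep_wo s) x y"
  shows "r = s"
proof -
  have "weak_order (Rep_wo r)" "weak_order (Rep_wo s)"
    using Rep_wo by auto
  then have "(x, y) \<in> Rep_wo r \<longleftrightarrow> (x, y) \<in> Rep_wo s" for x y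
    using assms[of y x]
    unfolding weak_order_def strict_def refl_on_def total_on_def
    by (cases "x = y") blast+
  then have "Rep_wo r = Rep_wo s" by auto
  then show ?thesis by (simp add: Rep_wo_inject)
qed

lemma sle_antisym: "sle x y \<Longrightarrow> sle y x \<Longrightarrow> x = y"
  by (cases x; cases y) (auto intro: Rep_wo_eqI)

lemma meet_eqI: "is_meet x y m \<Longrightarrow> meet x y = m"
  unfolding meet_def is_meet_def by (rule the_equality) (auto intro: sle_antisym)

lemma meet_idem: "meet x x = x"
  by (rule meet_eqI) (auto simp: is_meet_def sle_refl)

lemma meet_opposite_strict:
  assumes "strict (Rep_wo r) a b" and "strict (Rep_wo s) b a"
  shows "meet (WO r) (WO s) = Cyc"
proof (rule meet_eqI)
  have "z = Cyc" if "sle z (WO r)" "sle z (WO s)" for z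
    using that assms by (cases z) (auto simp: strict_def)
  then show "is_meet (WO r) (WO s) Cyc"
    unfolding is_meet_def by (metis sle.simps(1))
qed

lemma consistent_refl: "valid p \<Longrightarrow> consistent p p"
  by (simp add: consistent_def valid_def meet_idem)

lemma consistent_if_same_value:
  assumes "consistency_respecting w app \<Upsilon>" and "valid p" and "valid q" and "w p = w q"
  shows "consistent p q"
  using assms consistent_refl[of q]
  unfolding consistency_respecting_def by metis

text \<open>The weak order with a on top, b second and all other alternatives tied below.\<close>

definition top_two_rel :: "'a \<Rightarrow> 'a \<Rightarrow> ('a \<times> 'a) set" where
  "top_two_rel a b = {(x, y). x = a \<or> (x = b \<and> y \<noteq> a) \<or> (y \<noteq> a \<and> y \<noteq> b)}"

definition top_two :: "'a \<Rightarrow> 'a \<Rightarrow> 'a upref" where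
  "top_two a b = WO (Abs_wo (top_two_rel a b))"

lemma weak_order_top_two_rel: "a \<noteq> b \<Longrightarrow> weak_order (top_two_rel a b)"
  unfolding weak_order_def top_two_rel_def refl_on_def total_on_def trans_def by auto

lemma Rep_wo_top_two_rel: "a \<noteq> b \<Longrightarrow> Rep_wo (Abs_wo (top_two_rel a b)) = top_two_rel a b"
  by (simp add: Abs_wo_inverse weak_order_top_two_rel)

lemma strict_top_two_rel: "a \<noteq> b \<Longrightarrow> strict (top_two_rel a b) a b"
  unfolding strict_def top_two_rel_def by auto

lemma Restr_top_two_rel_swap:
  "{x, y} \<noteq> {a, b} \<Longrightarrow> Restr (top_two_rel a b) {x, y} = Restr (top_two_rel b a) {x, y}"
  unfolding top_two_rel_def by (auto simp: doubleton_eq_iff)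

lemma meet_top_two_swap: "a \<noteq> b \<Longrightarrow> meet (top_two a b) (top_two b a) = Cyc"
  unfolding top_two_def
  by (rule meet_opposite_strict[of _ a b]) (simp_all add: Rep_wo_top_two_rel strict_top_two_rel)

definition flip_profile :: "'a \<Rightarrow> 'a \<Rightarrow> 'i set \<Rightarrow> 'i \<Rightarrow> 'a upref" where
  "flip_profile a b S k = (if k \<in> S then top_two b a else top_two a b)"

lemma valid_flip_profile: "valid (flip_profile a b S)"
  by (simp add: valid_def flip_profile_def top_two_def)

lemma consistent_flip_profile_iff:
  assumes "a \<noteq> b"
  shows "consistent (flip_profile a b S) (flip_profile a b T) \<longleftrightarrow> S = T"
proof
  assume "consistent (flip_profile a b S) (flip_profile a b T)"
  then have "k \<in> S \<longleftrightarrow> k \<in> T" for k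
    using meet_top_two_swap[OF assms] meet_top_two_swap[OF assms[symmetric]]
    unfolding consistent_def flip_profile_def by (metis (full_types))
  then show "S = T" by blast
qed (simp add: consistent_refl valid_flip_profile)

lemma iia_relD:
  assumes "iia_rel W" and "valid p" and "valid q"
    and "\<And>j. Restr (urel (p j)) {x, y} = Restr (urel (q j)) {x, y}"
  shows "Restr (W p) {x, y} = Restr (W q) {x, y}"
  using assms unfolding iia_rel_def by blast

lemma iia_flip_profile_eq:
  assumes "iia_rel W" and "a \<noteq> b"
    and "(a, b) \<in> W (flip_profile a b S) \<longleftrightarrow> (a, b) \<in> W (flip_profile a b T)"
    and "(b, a) \<in> W (flip_profile a b S) \<longleftrightarrow> (b, a) \<in> W (flip_profile a b T)"
  shows "W (flip_profile a b S) = W (flip_profile a b T)"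
proof (intro set_eqI, clarify)
  fix x y
  show "(x, y) \<in> W (flip_profile a b S) \<longleftrightarrow> (x, y) \<in> W (flip_profile a b T)"
  proof (cases "{x, y} = {a, b}")
    case True
    then show ?thesis using assms(3,4) by (auto simp: doubleton_eq_iff)
  next
    case False
    have "Restr (urel (flip_profile a b S k)) {x, y} = Restr (urel (flip_profile a b T k)) {x, y}"
      for k
      using \<open>a \<noteq> b\<close> Restr_top_two_rel_swap[OF False]
      by (simp add: flip_profile_def top_two_def Rep_wo_top_two_rel)
    then have "Restr (W (flip_profile a b S)) {x, y} = Restr (W (flip_profile a b T)) {x, y}"
      by (rule iia_relD[OF assms(1) valid_flip_profile valid_flip_profile])
    then show ?thesis by blast
  qed
qed

lemma induced_by_eq:
  assumes "induced_by w W" and "valid p" and "valid q" and "W p = W q"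
  shows "w p = w q"
  using assms by (simp add: induced_by_def)

lemma induced_by_total:
  assumes "induced_by w W" and "valid p" and "x \<noteq> y"
  shows "(x, y) \<in> W p \<or> (y, x) \<in> W p"
  using assms unfolding induced_by_def total_on_def by auto

lemma two_distinct_elements:
  assumes "card (UNIV :: 'a set) \<ge> 2"
  obtains a b :: 'a where "a \<noteq> b"
proof -
  have "\<not> card (UNIV :: 'a set) \<le> Suc 0"
    using assms by simp
  then show ?thesis
    using that card_le_Suc0_iff_eq[of "UNIV :: 'a set"] card.infinite by force
qed

theorem theorem9:
  fixes w :: "('i::finite \<Rightarrow> 'a::finite upref) \<Rightarrow> 'a upref"
  assumes "card (UNIV :: 'a set) \<ge> 3"
    and "card (UNIV :: 'i set) \<ge> 2"
    and "unanimity_iia w"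
    and "non_dictatorship w"
  shows "\<forall>app. \<not> (\<exists>\<Upsilon>. consistency_respecting w app \<Upsilon>)"
proof (intro allI notI, elim exE)
  fix app \<Upsilon>
  assume CR: "consistency_respecting w app \<Upsilon>"
  obtain W where ind: "induced_by w W" and iia: "iia_rel W"
    using assms(3) unfolding unanimity_iia_def by blast
  have "card (UNIV :: 'a set) \<ge> 2"
    using assms(1) by simp
  then obtain a b :: 'a where ab: "a \<noteq> b"
    by (rule two_distinct_elements)
  obtain i j :: 'i where ij: "i \<noteq> j"
    using assms(2) by (rule two_distinct_elements)
  let ?P = "flip_profile a b"
  define cmp where "cmp S = ((a, b) \<in> W (?P S), (b, a) \<in> W (?P S))" for S
  have "inj_on cmp (Pow {i, j})"
  proof (rule inj_onI)
    fix S T assume "cmp S = cmp T"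
    then have "W (?P S) = W (?P T)"
      unfolding cmp_def by (intro iia_flip_profile_eq[OF iia ab]) auto
    then have "w (?P S) = w (?P T)"
      by (rule induced_by_eq[OF ind valid_flip_profile valid_flip_profile])
    then have "consistent (?P S) (?P T)"
      by (rule consistent_if_same_value[OF CR valid_flip_profile valid_flip_profile])
    then show "S = T"
      by (simp add: consistent_flip_profile_iff[OF ab])
  qed
  moreover have "cmp ` Pow {i, j} \<subseteq> {(True, True), (True, False), (False, True)}"
    using induced_by_total[OF ind valid_flip_profile ab] unfolding cmp_def by auto
  ultimately have "card (Pow {i, j}) \<le> card {(True, True), (True, False), (False, True)}"
    by (intro card_inj_on_le) auto
  then show False
    using ij by (simp add: card_Pow)
qed

end
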